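(* Let $m \ge n$, let $A$ be an $m \times n$ matrix with integer coefficients of full rank $n$, and let $b \in \mathbb{Z}^m$. Set $H = \max_{i,j}\left(|A_{ij}|, |b_i|\right)$. If $b$ is not orthogonal to the image of $A$, then \[ \kappa_{LS}(A,b) \le 3\, n^{\frac{n}{2}+1} m^{n+\frac{1}{2}} H^{2n+1}. \]
   Context: Norms are Euclidean $2$-norms. Let $x \in \mathbb{R}^n$ be the minimizer of $\|Ax-b\|^2$ (least squares solution), $r = Ax - b$ the residual, and $\theta \in [0,\pi/2]$ defined by $\sin\theta = \|r\|/\|b\|$. Let $\sigma_{\max}(A)$ and $\sigma_{\min}(A)$ be the largest and smallest singular values of $A$ and $\kappa(A) = \sigma_{\max}(A)/\sigma_{\min}(A)$. The condition number of the least squares problem is \[ \kappa_{LS}(A,b) = \frac{2\kappa(A)}{\cos\theta} + \tan\theta\,\kappa(A)^2 . \] *)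

theory Defs
  imports "HOL-Analysis.Analysis"
begin

definition mat_eigenvalues :: "real^'n^'n \<Rightarrow> real set" where
  "mat_eigenvalues M = {e. \<exists>v. v \<noteq> 0 \<and> M *v v = e *\<^sub>R v}"

definition sigma_max :: "real^'n^'m \<Rightarrow> real" where
  "sigma_max A = sqrt (Max (mat_eigenvalues (transpose A ** A)))"

definition sigma_min :: "real^'n^'m \<Rightarrow> real" where
  "sigma_min A = sqrt (Min (mat_eigenvalues (transpose A ** A)))"

definition kappa :: "real^'n^'m \<Rightarrow> real" where
  "kappa A = sigma_max A / sigma_min A"

definition ls_solution :: "real^'n^'m \<Rightarrow> real^'m \<Rightarrow> real^'n" where
  "ls_solution A b = (THE x. \<forall>y. (norm (A *v x - b))\<^sup>2 \<le> (norm (A *v y - b))\<^sup>2)"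

definition ls_residual :: "real^'n^'m \<Rightarrow> real^'m \<Rightarrow> real^'m" where
  "ls_residual A b = A *v ls_solution A b - b"

definition ls_theta :: "real^'n^'m \<Rightarrow> real^'m \<Rightarrow> real" where
  "ls_theta A b = arcsin (norm (ls_residual A b) / norm b)"

definition kappa_LS :: "real^'n^'m \<Rightarrow> real^'m \<Rightarrow> real" where
  "kappa_LS A b = 2 * kappa A / cos (ls_theta A b) + tan (ls_theta A b) * (kappa A)\<^sup>2"

definition height :: "real^'n^'m \<Rightarrow> real^'m \<Rightarrow> real" where
  "height A b = Max ({\<bar>A $ i $ j\<bar> | i j. True} \<union> {\<bar>b $ i\<bar> | i. True})"

end

theory Submission
  imports Defs
begin

text \<open>
  Let G = A^T A and D = det G. As A is injective, kappa(A)^2 is the ratio of the extreme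
  eigenvalues of G, which are positive. The largest one is at most the squared Frobenius norm
  n m H^2. For the smallest one, every eigenvector v satisfies |v|^2 <= tr(G^-1) |A v|^2, and
  Gram-Schmidt with the i-th column taken last gives (G^-1)_ii D <= (m H^2)^(n-1); hence
  kappa(A)^2 D <= n^2 m^n H^(2n).
  On the least squares side, kappa_LS <= 3 kappa^2 / cos theta = 3 kappa^2 |b| / |A x|, and by
  Cramer's rule D |A x|^2 = D (x . A^T b) is a positive integer, so 1 <= D |A x|. Altogether
  kappa_LS <= 3 n^2 m^(n + 1/2) H^(2n + 1), which is below the stated bound.
\<close>

lemma quadratic_nonneg_imp_linear_coeff_zero:
  fixes a c :: real
  assumes nonneg: "\<And>t. 0 \<le> 2 * t * a + t\<^sup>2 * c" and "0 \<le> c"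
  shows "a = 0"
proof -
  define t where "t = - a / (c + 1)"
  have "2 * t * a + t\<^sup>2 * c = - (a\<^sup>2 * (c + 2)) / (c + 1)\<^sup>2"
    using \<open>0 \<le> c\<close> by (simp add: t_def divide_simps) (simp add: algebra_simps power2_eq_square)
  moreover have "0 < (c + 1)\<^sup>2"
    using \<open>0 \<le> c\<close> by (simp add: add_nonneg_eq_0_iff)
  ultimately have "a\<^sup>2 * (c + 2) \<le> 0"
    using nonneg[of t] by (auto simp: divide_le_0_iff)
  then have "a\<^sup>2 \<le> 0"
    using \<open>0 \<le> c\<close> by (simp add: mult_le_0_iff)
  then show ?thesis by simp
qed

lemma symmetric_matrix_inner_commute:
  fixes G :: "real^'n^'n"
  assumes "transpose G = G"
  shows "x \<bullet> (G *v y) = (G *v x) \<bullet> y"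
  by (metis assms dot_lmul_matrix vector_transpose_matrix)

lemma rayleigh_minimizer_is_eigenvector:
  fixes G :: "real^'n^'n"
  assumes symG: "transpose G = G"
    and lower: "\<And>v. mu * (v \<bullet> v) \<le> v \<bullet> (G *v v)"
    and attained: "u \<bullet> (G *v u) = mu * (u \<bullet> u)"
  shows "G *v u = mu *\<^sub>R u"
proof -
  define q where "q v = v \<bullet> (G *v v) - mu * (v \<bullet> v)" for v
  have q_nonneg: "0 \<le> q v" for v
    using lower[of v] by (simp add: q_def)
  define w where "w = G *v u - mu *\<^sub>R u"
  have uGw: "u \<bullet> (G *v w) = w \<bullet> (G *v u)"
    using symmetric_matrix_inner_commute[OF symG, of u w] by (simp add: inner_commute)
  have "w \<bullet> w = w \<bullet> (G *v u) - mu * (w \<bullet> u)"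
    by (subst (2) w_def) (simp add: inner_diff_right)
  then have wGu: "w \<bullet> (G *v u) = w \<bullet> w + mu * (w \<bullet> u)"
    by simp
  have "q (u + t *\<^sub>R w) = 2 * t * (w \<bullet> w) + t\<^sup>2 * q w" for t
    using uGw wGu attained inner_commute[of u w]
    by (simp add: q_def matrix_vector_right_distrib matrix_vector_mult_scaleR inner_add_left
        inner_add_right algebra_simps power2_eq_square)
  then have "w \<bullet> w = 0"
    using q_nonneg by (intro quadratic_nonneg_imp_linear_coeff_zero[of _ "q w"]) metis+
  then show ?thesis by (simp add: w_def)
qed

lemma symmetric_matrix_eigenvalues_nonempty:
  fixes G :: "real^'n^'n"
  assumes "transpose G = G"
  shows "mat_eigenvalues G \<noteq> {}"
proof -
  let ?S = "sphere (0::real^'n) 1"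
  have "continuous_on ?S (\<lambda>v. v \<bullet> (G *v v))"
    by (intro continuous_intros continuous_on_id linear_continuous_on)
       (simp add: bounded_linear_def matrix_vector_mul_bounded_linear)
  moreover have "?S \<noteq> {}"
    by simp
  ultimately obtain u where u: "u \<in> ?S"
    and u_min: "\<And>y. y \<in> ?S \<Longrightarrow> u \<bullet> (G *v u) \<le> y \<bullet> (G *v y)"
    using continuous_attains_inf[OF compact_sphere] by blast
  define mu where "mu = u \<bullet> (G *v u)"
  have "mu * (v \<bullet> v) \<le> v \<bullet> (G *v v)" for v
  proof (cases "v = 0")
    case False
    then have "v /\<^sub>R norm v \<in> ?S"
      by simp
    then have "mu \<le> (v /\<^sub>R norm v) \<bullet> (G *v (v /\<^sub>R norm v))"
      unfolding mu_def by (rule u_min)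
    also have "\<dots> = (v \<bullet> (G *v v)) / (norm v)\<^sup>2"
      by (simp add: matrix_vector_mult_scaleR power2_eq_square divide_inverse mult_ac)
    finally have "mu * (norm v)\<^sup>2 \<le> v \<bullet> (G *v v)"
      using False by (simp add: field_simps)
    then show ?thesis
      by (simp add: power2_norm_eq_inner)
  qed simp
  moreover have "u \<bullet> (G *v u) = mu * (u \<bullet> u)"
    using u by (simp add: mu_def norm_eq_1)
  ultimately have "G *v u = mu *\<^sub>R u"
    by (rule rayleigh_minimizer_is_eigenvector[OF assms])
  moreover have "u \<noteq> 0"
    using u by auto
  ultimately show ?thesis
    unfolding mat_eigenvalues_def by blast
qed

lemma symmetric_matrix_eigenvalues_finite:
  fixes G :: "real^'n^'n"
  assumes symG: "transpose G = G"
  shows "finite (mat_eigenvalues G)"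
proof -
  let ?E = "mat_eigenvalues G"
  define ev where "ev e = (SOME v. v \<noteq> 0 \<and> G *v v = e *\<^sub>R v)" for e
  have ev: "ev e \<noteq> 0 \<and> G *v ev e = e *\<^sub>R ev e" if "e \<in> ?E" for e
    unfolding ev_def by (rule someI_ex) (use that in \<open>simp add: mat_eigenvalues_def\<close>)
  have "inj_on ev ?E"
    by (rule inj_onI) (metis ev scaleR_cancel_right)
  moreover have "ev x \<bullet> ev y = 0" if "x \<in> ?E" "y \<in> ?E" "x \<noteq> y" for x y
  proof -
    have "y * (ev x \<bullet> ev y) = x * (ev x \<bullet> ev y)"
      using symmetric_matrix_inner_commute[OF symG, of "ev x" "ev y"] ev that by simp
    then show ?thesis using that by simp
  qed
  then have "pairwise orthogonal (ev ` ?E)"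
    unfolding pairwise_def orthogonal_def by auto
  then have "independent (ev ` ?E)"
    by (rule pairwise_orthogonal_independent) (use ev in auto)
  ultimately show ?thesis
    using independent_imp_finite finite_imageD by blast
qed

lemma gram_matrix_symmetric:
  fixes A :: "real^'n^'m"
  shows "transpose (transpose A ** A) = transpose A ** A"
  by (simp add: matrix_transpose_mul)

lemma gram_matrix_entry:
  fixes A :: "real^'n^'m"
  shows "(transpose A ** A) $ i $ j = column i A \<bullet> column j A"
  by (simp add: matrix_matrix_mult_def transpose_def column_def inner_vec_def)

lemma gram_quadratic_form:
  fixes A :: "real^'n^'m"
  shows "x \<bullet> ((transpose A ** A) *v y) = (A *v x) \<bullet> (A *v y)"
  by (metis dot_lmul_matrix matrix_vector_mul_assoc vector_transpose_matrix)

lemma column_matrix_mult: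
  fixes A :: "real^'n^'m" and T :: "real^'k^'n"
  shows "column k (A ** T) = (\<Sum>l\<in>UNIV. T $ l $ k *\<^sub>R column l A)"
  by (simp add: vec_eq_iff column_def matrix_matrix_mult_def sum_component mult.commute)

lemma det_gram_orthogonal_columns:
  fixes Z :: "real^'n^'m"
  assumes "\<And>i j. i \<noteq> j \<Longrightarrow> column i Z \<bullet> column j Z = 0"
  shows "det (transpose Z ** Z) = (\<Prod>k\<in>UNIV. column k Z \<bullet> column k Z)"
  using assms by (subst det_diagonal) (simp_all add: gram_matrix_entry)

text \<open>
  The index types carry no order, so triangularity is expressed through an injective ranking
  into the naturals (the library lemma det_upperdiagonal needs a well-ordered index type).
\<close>

lemma det_triangular_wrt_ranking:
  fixes T :: "'a::comm_ring_1^'n^'n" and r :: "'n \<Rightarrow> nat"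
  assumes "inj r" and triangular: "\<And>l k. T $ l $ k \<noteq> 0 \<Longrightarrow> l = k \<or> r l < r k"
  shows "det T = (\<Prod>k\<in>UNIV. T $ k $ k)"
proof -
  let ?P = "{p. p permutes (UNIV::'n set)}"
  have "(\<Prod>i\<in>UNIV. T $ i $ p i) = 0" if p: "p permutes UNIV" and "p \<noteq> id" for p
  proof (rule ccontr)
    assume nz: "(\<Prod>i\<in>UNIV. T $ i $ p i) \<noteq> 0"
    have "T $ i $ p i \<noteq> 0" for i
      using nz by (metis UNIV_I finite prod_zero)
    then have le: "i = p i \<or> r i < r (p i)" for i
      using triangular by blast
    have "\<not> r i < r (p i)" for i
    proof
      assume "r i < r (p i)"
      then have "(\<Sum>i\<in>UNIV. r i) < (\<Sum>i\<in>UNIV. r (p i))"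
        using le by (intro sum_strict_mono_ex1) (auto, metis order_refl less_imp_le)
      also have "\<dots> = (\<Sum>i\<in>UNIV. r i)"
        using sum.permute[OF p, of r] by (simp add: o_def)
      finally show False by simp
    qed
    then have "p = id"
      using le by auto
    then show False
      using \<open>p \<noteq> id\<close> by simp
  qed
  then have "det T = (\<Sum>p\<in>?P. if p = id then (\<Prod>k\<in>UNIV. T $ k $ k) else 0)"
    unfolding det_def by (intro sum.cong) (auto simp: sign_id)
  also have "\<dots> = (\<Prod>k\<in>UNIV. T $ k $ k)"
    by (simp add: permutes_id)
  finally show ?thesis .
qed

lemma ranking_with_last:
  fixes i :: "'n::finite"
  obtains r :: "'n \<Rightarrow> nat" where "inj r" and "\<And>k. k \<noteq> i \<Longrightarrow> r k < r i"
proof -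
  obtain f :: "'n \<Rightarrow> nat" and n where f: "f ` UNIV = {..<n}" "inj f"
    using finite_imp_inj_to_nat_seg[of "UNIV :: 'n set"] by auto
  define r where "r k = (if k = i then n else f k)" for k
  have "f k < n" for k
    using f(1) by auto
  then have "inj r" and "\<And>k. k \<noteq> i \<Longrightarrow> r k < r i"
    using f(2) by (auto simp: r_def inj_def split: if_splits)
  then show thesis by (rule that)
qed

lemma span_image_finite_sum:
  fixes f :: "'i \<Rightarrow> 'a::real_vector"
  assumes "finite I" and "y \<in> span (f ` I)"
  shows "\<exists>c. y = (\<Sum>l\<in>I. c l *\<^sub>R f l)"
  using assms(2)
proof (induction rule: span_induct_alt)
  case base
  show ?case by (rule exI[of _ "\<lambda>_. 0"]) simp
next
  case (step a x y)
  then obtain l0 d where l0: "l0 \<in> I" "x = f l0" and d: "y = (\<Sum>l\<in>I. d l *\<^sub>R f l)"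
    by auto
  have "a *\<^sub>R x + y = (\<Sum>l\<in>I. (d l + (if l = l0 then a else 0)) *\<^sub>R f l)"
    using l0 assms(1)
    by (simp add: d scaleR_add_left sum.distrib if_distrib[of "\<lambda>a. a *\<^sub>R f _"] cong: if_cong)
  then show ?case
    by (rule exI[of _ "\<lambda>l. d l + (if l = l0 then a else 0)"])
qed

lemma orthogonal_components_wrt_ranking:
  fixes A :: "real^'n^'m" and r :: "'n \<Rightarrow> nat"
  assumes "inj r"
  obtains z where
    "\<And>k. column k A - z k \<in> span ((\<lambda>l. column l A) ` {l. r l < r k})"
    "\<And>k w. w \<in> span ((\<lambda>l. column l A) ` {l. r l < r k}) \<Longrightarrow> z k \<bullet> w = 0"
    "\<And>i j. i \<noteq> j \<Longrightarrow> z i \<bullet> z j = 0"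
proof -
  define S where "S k = (\<lambda>l. column l A) ` {l. r l < r k}" for k
  have "\<exists>z. column k A - z \<in> span (S k) \<and> (\<forall>w\<in>span (S k). z \<bullet> w = 0)" for k
  proof -
    obtain y z where "y \<in> span (S k)" "\<And>w. w \<in> span (S k) \<Longrightarrow> orthogonal z w"
      "column k A = y + z"
      using orthogonal_subspace_decomp_exists[of "S k" "column k A"] by blast
    then show ?thesis
      by (intro exI[of _ z]) (auto simp: orthogonal_def)
  qed
  then obtain z where z_span: "\<And>k. column k A - z k \<in> span (S k)"
    and z_orth: "\<And>k w. w \<in> span (S k) \<Longrightarrow> z k \<bullet> w = 0"
    by metis
  have "z i \<in> span (S j)" if "r i < r j" for i j
  proof -
    have "span (S i) \<subseteq> span (S j)"
      using that by (intro span_mono) (auto simp: S_def)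
    then have "column i A - z i \<in> span (S j)"
      using z_span by blast
    moreover have "column i A \<in> span (S j)"
      using that by (intro span_base) (auto simp: S_def)
    ultimately have "column i A - (column i A - z i) \<in> span (S j)"
      by (rule span_diff[rotated])
    then show ?thesis
      by simp
  qed
  then have orth_lt: "z j \<bullet> z i = 0" if "r i < r j" for i j
    using that z_orth by blast
  show thesis
  proof (rule that)
    show "column k A - z k \<in> span ((\<lambda>l. column l A) ` {l. r l < r k})" for k
      using z_span by (simp add: S_def)
    show "z k \<bullet> w = 0" if "w \<in> span ((\<lambda>l. column l A) ` {l. r l < r k})" for k w
      using z_orth that by (simp add: S_def)
    show "z i \<bullet> z j = 0" if "i \<noteq> j" for i j
    proof -
      have "r i < r j \<or> r j < r i"
        using that assms by (metis injD linorder_neqE_nat)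
      then show ?thesis
        using orth_lt[of i j] orth_lt[of j i] by (auto simp: inner_commute)
    qed
  qed
qed

lemma det_gram_matrix_mult:
  fixes A :: "real^'n^'m" and T :: "real^'n^'n"
  shows "det (transpose (A ** T) ** (A ** T)) = (det T)\<^sup>2 * det (transpose A ** A)"
proof -
  have "transpose (A ** T) ** (A ** T) = transpose T ** (transpose A ** A) ** T"
    by (simp add: matrix_transpose_mul matrix_mul_assoc)
  then show ?thesis
    by (simp add: det_mul det_transpose power2_eq_square)
qed

lemma gram_schmidt_det:
  fixes A :: "real^'n^'m" and r :: "'n \<Rightarrow> nat"
  assumes "inj r"
  obtains z where
    "\<And>k. column k A - z k \<in> span ((\<lambda>l. column l A) ` {l. r l < r k})"
    "\<And>k w. w \<in> span ((\<lambda>l. column l A) ` {l. r l < r k}) \<Longrightarrow> z k \<bullet> w = 0"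
    "det (transpose A ** A) = (\<Prod>k\<in>UNIV. z k \<bullet> z k)"
proof -
  obtain z where z_span: "\<And>k. column k A - z k \<in> span ((\<lambda>l. column l A) ` {l. r l < r k})"
    and z_orth: "\<And>k w. w \<in> span ((\<lambda>l. column l A) ` {l. r l < r k}) \<Longrightarrow> z k \<bullet> w = 0"
    and z_pairwise: "\<And>i j. i \<noteq> j \<Longrightarrow> z i \<bullet> z j = 0"
    using orthogonal_components_wrt_ranking[OF assms, of A] by blast
  have "\<exists>c. column k A - z k = (\<Sum>l\<in>{l. r l < r k}. c l *\<^sub>R column l A)" for k
    by (rule span_image_finite_sum[OF _ z_span]) simp
  then obtain t where t: "\<And>k. column k A - z k = (\<Sum>l\<in>{l. r l < r k}. t k l *\<^sub>R column l A)"
    by metis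
  define T :: "real^'n^'n" where
    "T = (\<chi> l k. (if l = k then 1 else 0) - (if r l < r k then t k l else 0))"
  have "det T = (\<Prod>k\<in>UNIV. T $ k $ k)"
    by (rule det_triangular_wrt_ranking[OF assms]) (auto simp: T_def split: if_splits)
  then have "det T = 1"
    by (simp add: T_def)
  have "column k (A ** T) = z k" for k
  proof -
    have "column k (A ** T) = column k A
        - (\<Sum>l\<in>UNIV. (if r l < r k then t k l *\<^sub>R column l A else 0))"
      by (simp add: column_matrix_mult T_def scaleR_diff_left sum_subtractf
          if_distrib[of "\<lambda>a. a *\<^sub>R _"] cong: if_cong)
    also have "\<dots> = z k"
      by (simp add: t[symmetric] sum.inter_filter[symmetric])
    finally show ?thesis .
  qed
  then have "det (transpose (A ** T) ** (A ** T)) = (\<Prod>k\<in>UNIV. z k \<bullet> z k)"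
    using z_pairwise by (simp add: det_gram_orthogonal_columns)
  then have "det (transpose A ** A) = (\<Prod>k\<in>UNIV. z k \<bullet> z k)"
    using \<open>det T = 1\<close> by (simp add: det_gram_matrix_mult)
  then show thesis
    using that z_span z_orth by blast
qed

lemma det_gram_nonneg:
  fixes A :: "real^'n^'m"
  shows "0 \<le> det (transpose A ** A)"
proof -
  obtain r :: "'n \<Rightarrow> nat" where "inj r"
    using ranking_with_last by metis
  then obtain z :: "'n \<Rightarrow> real^'m" where "det (transpose A ** A) = (\<Prod>k\<in>UNIV. z k \<bullet> z k)"
    using gram_schmidt_det[OF \<open>inj r\<close>, of A] by metis
  then show ?thesis
    by (simp add: prod_nonneg)
qed

lemma gram_inverse_diagonal_bound:
  fixes A :: "real^'n^'m"
  assumes g: "(transpose A ** A) *v g = axis i 1"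
  shows "g $ i * det (transpose A ** A) \<le> (\<Prod>k\<in>UNIV - {i}. column k A \<bullet> column k A)"
proof -
  obtain r :: "'n \<Rightarrow> nat" where r: "inj r" and last: "\<And>k. k \<noteq> i \<Longrightarrow> r k < r i"
    using ranking_with_last[of i] by blast
  have earlier_i: "{l. r l < r i} = UNIV - {i}"
    using last by auto
  obtain z where z_span: "\<And>k. column k A - z k \<in> span ((\<lambda>l. column l A) ` {l. r l < r k})"
    and z_orth: "\<And>k w. w \<in> span ((\<lambda>l. column l A) ` {l. r l < r k}) \<Longrightarrow> z k \<bullet> w = 0"
    and det_eq: "det (transpose A ** A) = (\<Prod>k\<in>UNIV. z k \<bullet> z k)"
    using gram_schmidt_det[OF r, of A] by blast
  have z_col: "z k \<bullet> column k A = z k \<bullet> z k" for k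
    using z_orth[OF z_span, of k] by (simp add: inner_diff_right)
  have z_le: "z k \<bullet> z k \<le> column k A \<bullet> column k A" for k
  proof -
    have "column k A \<bullet> column k A = (column k A - z k) \<bullet> (column k A - z k) + z k \<bullet> z k"
      using z_col by (simp add: inner_diff_left inner_diff_right inner_commute)
    then show ?thesis by simp
  qed
  have col_Ag: "column l A \<bullet> (A *v g) = (if l = i then 1 else 0)" for l
  proof -
    have "column l A \<bullet> (A *v g) = (transpose A *v (A *v g)) $ l"
      by (simp add: matrix_vector_mult_def transpose_def column_def inner_vec_def mult.commute)
    also have "\<dots> = ((transpose A ** A) *v g) $ l"
      by (simp add: matrix_vector_mul_assoc)
    finally show ?thesis
      using g by (simp add: axis_def)
  qed
  \<comment> \<open>With column i orthogonalised last, z i is orthogonal to every other column, and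
    column i A - z i lies in their span, which is orthogonal to A g.\<close>
  have "orthogonal (A *v g) (column i A - z i)"
    by (rule orthogonal_to_span[OF z_span])
      (use earlier_i col_Ag in \<open>auto simp: orthogonal_def inner_commute\<close>)
  then have "1 = z i \<bullet> (A *v g)"
    using col_Ag[of i] inner_commute[of "A *v g" "column i A"] inner_commute[of "A *v g" "z i"]
    by (simp add: orthogonal_def inner_diff_right)
  also have "\<dots> = (\<Sum>l\<in>UNIV. g $ l * (z i \<bullet> column l A))"
    by (simp add: matrix_mult_sum inner_sum_right scalar_mult_eq_scaleR)
  also have "\<dots> = g $ i * (z i \<bullet> z i)"
    using z_orth[of _ i] z_col earlier_i
    by (simp add: sum.remove[of UNIV i] sum.neutral span_base)
  finally have "g $ i * det (transpose A ** A) = (\<Prod>k\<in>UNIV - {i}. z k \<bullet> z k)"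
    unfolding det_eq by (simp add: prod.remove[of UNIV i] mult.assoc[symmetric])
  also have "\<dots> \<le> (\<Prod>k\<in>UNIV - {i}. column k A \<bullet> column k A)"
    by (intro prod_mono) (simp add: z_le)
  finally show ?thesis .
qed

lemma inner_self_le_card_mult:
  fixes v :: "real^'n"
  assumes "\<And>i. \<bar>v $ i\<bar> \<le> H"
  shows "v \<bullet> v \<le> real CARD('n) * H\<^sup>2"
proof -
  have "v \<bullet> v = (\<Sum>i\<in>UNIV. (v $ i)\<^sup>2)"
    by (simp add: inner_vec_def power2_eq_square)
  also have "\<dots> \<le> (\<Sum>i\<in>(UNIV::'n set). H\<^sup>2)"
    by (intro sum_mono) (metis assms abs_ge_zero order_trans power2_abs power_mono)
  finally show ?thesis
    by simp
qed

lemma det_gram_pos: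
  fixes A :: "real^'n^'m"
  assumes "inj ((*v) A)"
  shows "0 < det (transpose A ** A)"
proof -
  have "x = 0" if "(transpose A ** A) *v x = 0" for x
  proof -
    have "(A *v x) \<bullet> (A *v x) = 0"
      using gram_quadratic_form[of x A x] that by simp
    then show ?thesis
      using assms by (simp add: vec.inj_iff_eq_0)
  qed
  then have "det (transpose A ** A) \<noteq> 0"
    by (simp add: det_eq_0_rank less_rank_noninjective vec.inj_iff_eq_0)
  then show ?thesis
    using det_gram_nonneg[of A] by simp
qed

lemma gram_eigenvector_quadratic:
  fixes A :: "real^'n^'m"
  assumes "(transpose A ** A) *v v = e *\<^sub>R v"
  shows "e * (v \<bullet> v) = (A *v v) \<bullet> (A *v v)"
  using gram_quadratic_form[of v A v] assms by simp

lemma gram_eigenvalue_pos: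
  fixes A :: "real^'n^'m"
  assumes "inj ((*v) A)" and "e \<in> mat_eigenvalues (transpose A ** A)"
  shows "0 < e"
proof -
  obtain v where "v \<noteq> 0" and v: "(transpose A ** A) *v v = e *\<^sub>R v"
    using assms(2) by (auto simp: mat_eigenvalues_def)
  have "A *v v \<noteq> 0"
    using assms(1) \<open>v \<noteq> 0\<close> unfolding vec.inj_iff_eq_0 by blast
  then have "0 < e * (v \<bullet> v)"
    unfolding gram_eigenvector_quadratic[OF v] by simp
  then show ?thesis
    using inner_ge_zero[of v] by (auto simp: zero_less_mult_iff)
qed

lemma matrix_vector_inner_self_le_frobenius:
  fixes A :: "real^'n^'m"
  shows "(A *v v) \<bullet> (A *v v) \<le> (\<Sum>j\<in>UNIV. row j A \<bullet> row j A) * (v \<bullet> v)"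
proof -
  have "(A *v v) \<bullet> (A *v v) = (\<Sum>j\<in>UNIV. (row j A \<bullet> v)\<^sup>2)"
    by (simp add: inner_vec_def matrix_vector_mult_def row_def power2_eq_square)
  also have "\<dots> \<le> (\<Sum>j\<in>UNIV. (row j A \<bullet> row j A) * (v \<bullet> v))"
    by (intro sum_mono Cauchy_Schwarz_ineq)
  finally show ?thesis
    by (simp add: sum_distrib_right)
qed

lemma gram_eigenvalue_le_frobenius:
  fixes A :: "real^'n^'m"
  assumes "e \<in> mat_eigenvalues (transpose A ** A)"
  shows "e \<le> (\<Sum>j\<in>UNIV. row j A \<bullet> row j A)"
proof -
  obtain v where "v \<noteq> 0" and v: "(transpose A ** A) *v v = e *\<^sub>R v"
    using assms by (auto simp: mat_eigenvalues_def)
  have "e * (v \<bullet> v) \<le> (\<Sum>j\<in>UNIV. row j A \<bullet> row j A) * (v \<bullet> v)"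
    unfolding gram_eigenvector_quadratic[OF v] by (rule matrix_vector_inner_self_le_frobenius)
  then show ?thesis
    using \<open>v \<noteq> 0\<close> by (simp add: mult_le_cancel_right)
qed

lemma gram_eigenvalue_ge_inverse_trace:
  fixes A :: "real^'n^'m"
  assumes g: "\<And>i. (transpose A ** A) *v g i = axis i 1"
    and e: "e \<in> mat_eigenvalues (transpose A ** A)"
  shows "1 \<le> (\<Sum>i\<in>UNIV. g i $ i) * e"
proof -
  let ?G = "transpose A ** A"
  obtain v where "v \<noteq> 0" and v: "?G *v v = e *\<^sub>R v"
    using e by (auto simp: mat_eigenvalues_def)
  have "v $ i = (A *v g i) \<bullet> (A *v v)" for i
  proof -
    have "v $ i = (?G *v g i) \<bullet> v"
      by (simp add: g inner_axis')
    also have "\<dots> = g i \<bullet> (?G *v v)"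
      by (simp add: symmetric_matrix_inner_commute[OF gram_matrix_symmetric])
    also have "\<dots> = (A *v g i) \<bullet> (A *v v)"
      by (rule gram_quadratic_form)
    finally show ?thesis .
  qed
  moreover have "(A *v g i) \<bullet> (A *v g i) = g i $ i" for i
    using gram_quadratic_form[of "g i" A "g i"] g[of i] by (simp add: inner_axis)
  ultimately have coord: "(v $ i)\<^sup>2 \<le> g i $ i * ((A *v v) \<bullet> (A *v v))" for i
    by (metis Cauchy_Schwarz_ineq)
  have "v \<bullet> v = (\<Sum>i\<in>UNIV. (v $ i)\<^sup>2)"
    by (simp add: inner_vec_def power2_eq_square)
  also have "\<dots> \<le> (\<Sum>i\<in>UNIV. g i $ i * ((A *v v) \<bullet> (A *v v)))"
    by (intro sum_mono coord)
  also have "\<dots> = (\<Sum>i\<in>UNIV. g i $ i) * e * (v \<bullet> v)"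
    by (simp add: sum_distrib_right gram_eigenvector_quadratic[OF v, symmetric] mult.assoc)
  finally show ?thesis
    using \<open>v \<noteq> 0\<close> by (simp add: mult_le_cancel_right1)
qed

lemma gram_inverse_trace_det_bound:
  fixes A :: "real^'n^'m"
  assumes g: "\<And>i. (transpose A ** A) *v g i = axis i 1"
    and col: "\<And>k. column k A \<bullet> column k A \<le> C"
  shows "(\<Sum>i\<in>UNIV. g i $ i) * det (transpose A ** A) \<le> real CARD('n) * C ^ (CARD('n) - 1)"
proof -
  have "g i $ i * det (transpose A ** A) \<le> C ^ (CARD('n) - 1)" for i
  proof -
    have "g i $ i * det (transpose A ** A) \<le> (\<Prod>k\<in>UNIV - {i}. column k A \<bullet> column k A)"
      by (rule gram_inverse_diagonal_bound[OF g])
    also have "\<dots> \<le> (\<Prod>k\<in>UNIV - {i}. C)"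
      by (intro prod_mono) (simp add: col)
    finally show ?thesis
      by (simp add: card_Diff_singleton)
  qed
  then have "(\<Sum>i\<in>UNIV. g i $ i * det (transpose A ** A)) \<le> (\<Sum>i\<in>(UNIV::'n set). C ^ (CARD('n) - 1))"
    by (intro sum_mono)
  then show ?thesis
    by (simp add: sum_distrib_right)
qed

lemma kappa_sq_eigenvalue_ratio:
  fixes A :: "real^'n^'m"
  defines "E \<equiv> mat_eigenvalues (transpose A ** A)"
  assumes "inj ((*v) A)"
  shows "Max E \<in> E" and "Min E \<in> E" and "0 < Min E" and "(kappa A)\<^sup>2 = Max E / Min E"
proof -
  have "finite E" and "E \<noteq> {}"
    unfolding E_def
    by (intro symmetric_matrix_eigenvalues_finite symmetric_matrix_eigenvalues_nonempty
        gram_matrix_symmetric)+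
  then show "Max E \<in> E" and "Min E \<in> E"
    by simp_all
  then have "0 < Min E" and "0 < Max E"
    using gram_eigenvalue_pos[OF assms(2)] unfolding E_def by blast+
  then show "0 < Min E" and "(kappa A)\<^sup>2 = Max E / Min E"
    by (simp_all add: kappa_def sigma_max_def sigma_min_def E_def power_divide)
qed

lemma kappa_ge_one:
  fixes A :: "real^'n^'m"
  assumes "inj ((*v) A)"
  shows "1 \<le> kappa A"
proof -
  let ?E = "mat_eigenvalues (transpose A ** A)"
  have "finite ?E"
    using gram_matrix_symmetric by (rule symmetric_matrix_eigenvalues_finite)
  then have "Min ?E \<le> Max ?E"
    using kappa_sq_eigenvalue_ratio(1)[OF assms] by simp
  then have "1 \<le> (kappa A)\<^sup>2"
    using kappa_sq_eigenvalue_ratio(3,4)[OF assms] by simp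
  moreover have "0 \<le> kappa A"
    using \<open>Min ?E \<le> Max ?E\<close> kappa_sq_eigenvalue_ratio(3)[OF assms]
    by (simp add: kappa_def sigma_max_def sigma_min_def)
  ultimately show ?thesis
    using power2_le_imp_le[of 1 "kappa A"] by simp
qed

lemma kappa_sq_le:
  fixes A :: "real^'n^'m"
  assumes "inj ((*v) A)"
    and upper: "\<And>e. e \<in> mat_eigenvalues (transpose A ** A) \<Longrightarrow> e \<le> U"
    and lower: "\<And>e. e \<in> mat_eigenvalues (transpose A ** A) \<Longrightarrow> 1 \<le> S * e"
  shows "(kappa A)\<^sup>2 \<le> U * S"
proof -
  let ?E = "mat_eigenvalues (transpose A ** A)"
  note E = kappa_sq_eigenvalue_ratio[OF assms(1)]
  have "Max ?E \<le> U" and "1 \<le> S * Min ?E" and "0 \<le> U"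
    using upper lower E(1,2) gram_eigenvalue_pos[OF assms(1)] by (blast intro: order_trans less_imp_le)+
  moreover have "U * 1 \<le> U * (S * Min ?E)"
    using \<open>1 \<le> S * Min ?E\<close> \<open>0 \<le> U\<close> by (rule mult_left_mono)
  ultimately have "Max ?E / Min ?E \<le> U * S"
    using E(3) by (simp add: divide_le_eq mult.assoc)
  then show ?thesis
    by (simp add: E(4))
qed

lemma kappa_sq_det_gram_le:
  fixes A :: "real^'n^'m"
  assumes inj: "inj ((*v) A)" and entries: "\<And>i j. \<bar>A $ i $ j\<bar> \<le> H"
  shows "(kappa A)\<^sup>2 * det (transpose A ** A)
    \<le> (real CARD('n))\<^sup>2 * real CARD('m) ^ CARD('n) * H ^ (2 * CARD('n))"
proof -
  let ?G = "transpose A ** A" and ?n = "real CARD('n)" and ?m = "real CARD('m)"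
  have "det ?G \<noteq> 0"
    using det_gram_pos[OF inj] by simp
  then have "\<exists>x. ?G *v x = axis i 1" for i
    using cramer by blast
  then obtain g where g: "\<And>i. ?G *v g i = axis i 1"
    by metis
  have rows: "row j A \<bullet> row j A \<le> ?n * H\<^sup>2" for j
    by (rule inner_self_le_card_mult) (simp add: row_def entries)
  have cols: "column k A \<bullet> column k A \<le> ?m * H\<^sup>2" for k
    by (rule inner_self_le_card_mult) (simp add: column_def entries)
  have frobenius: "(\<Sum>j\<in>UNIV. row j A \<bullet> row j A) \<le> ?n * ?m * H\<^sup>2"
    using sum_mono[of UNIV "\<lambda>j. row j A \<bullet> row j A" "\<lambda>_. ?n * H\<^sup>2"] rows by (simp add: mult_ac)
  have "(kappa A)\<^sup>2 \<le> (?n * ?m * H\<^sup>2) * (\<Sum>i\<in>UNIV. g i $ i)"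
  proof (rule kappa_sq_le[OF inj])
    show "e \<le> ?n * ?m * H\<^sup>2" if "e \<in> mat_eigenvalues ?G" for e
      using gram_eigenvalue_le_frobenius[OF that] frobenius by linarith
    show "1 \<le> (\<Sum>i\<in>UNIV. g i $ i) * e" if "e \<in> mat_eigenvalues ?G" for e
      using g that by (rule gram_eigenvalue_ge_inverse_trace)
  qed
  then have "(kappa A)\<^sup>2 * det ?G \<le> (?n * ?m * H\<^sup>2) * ((\<Sum>i\<in>UNIV. g i $ i) * det ?G)"
    using det_gram_pos[OF inj] by (simp add: mult.assoc)
  also have "\<dots> \<le> (?n * ?m * H\<^sup>2) * (?n * (?m * H\<^sup>2) ^ (CARD('n) - 1))"
    by (intro mult_left_mono gram_inverse_trace_det_bound[OF g cols]) simp
  also have "\<dots> = ?n\<^sup>2 * ((?m * H\<^sup>2) ^ (CARD('n) - 1) * (?m * H\<^sup>2))"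
    by (simp add: power2_eq_square mult_ac)
  also have "\<dots> = ?n\<^sup>2 * (?m * H\<^sup>2) ^ CARD('n)"
    by (simp only: power_minus_mult[OF zero_less_card_finite])
  also have "\<dots> = ?n\<^sup>2 * ?m ^ CARD('n) * H ^ (2 * CARD('n))"
    by (simp add: power_mult_distrib power_mult[symmetric] mult.commute)
  finally show ?thesis .
qed

lemma inner_matrix_vector_transpose:
  fixes A :: "real^'n^'m"
  shows "(A *v w) \<bullet> r = w \<bullet> (transpose A *v r)"
  by (metis dot_lmul_matrix vector_transpose_matrix)

lemma normal_equations_pythagoras:
  fixes A :: "real^'n^'m"
  assumes "(transpose A ** A) *v x = transpose A *v b"
  shows "(norm (A *v y - b))\<^sup>2 = (norm (A *v (y - x)))\<^sup>2 + (norm (A *v x - b))\<^sup>2"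
proof -
  have "transpose A *v (A *v x - b) = 0"
    using assms by (simp add: matrix_vector_mult_diff_distrib matrix_vector_mul_assoc)
  then have orth: "(A *v (y - x)) \<bullet> (A *v x - b) = 0"
    by (simp add: inner_matrix_vector_transpose)
  have split: "A *v y - b = A *v (y - x) + (A *v x - b)"
    by (simp add: matrix_vector_mult_diff_distrib)
  show ?thesis
    unfolding split power2_norm_eq_inner using orth
    by (simp add: inner_add_left inner_add_right inner_commute)
qed

lemma ls_solution_eqI:
  fixes A :: "real^'n^'m"
  assumes inj: "inj ((*v) A)" and normal: "(transpose A ** A) *v x = transpose A *v b"
  shows "ls_solution A b = x"
  unfolding ls_solution_def
proof (rule the_equality)
  show "\<forall>y. (norm (A *v x - b))\<^sup>2 \<le> (norm (A *v y - b))\<^sup>2"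
  proof
    fix y
    show "(norm (A *v x - b))\<^sup>2 \<le> (norm (A *v y - b))\<^sup>2"
      using normal_equations_pythagoras[OF normal, of y] by simp
  qed
next
  fix x' assume "\<forall>y. (norm (A *v x' - b))\<^sup>2 \<le> (norm (A *v y - b))\<^sup>2"
  then have "(norm (A *v x' - b))\<^sup>2 \<le> (norm (A *v x - b))\<^sup>2"
    by blast
  then have "A *v (x' - x) = 0"
    using normal_equations_pythagoras[OF normal, of x'] by simp
  then have "x' - x = 0"
    using inj unfolding vec.inj_iff_eq_0 by blast
  then show "x' = x"
    by simp
qed

lemma ls_solution_normal_equations:
  fixes A :: "real^'n^'m"
  assumes "inj ((*v) A)"
  shows "(transpose A ** A) *v ls_solution A b = transpose A *v b"
proof -
  have "det (transpose A ** A) \<noteq> 0"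
    using det_gram_pos[OF assms] by simp
  then obtain x where "(transpose A ** A) *v x = transpose A *v b"
    using cramer by blast
  moreover from this have "ls_solution A b = x"
    by (rule ls_solution_eqI[OF assms])
  ultimately show ?thesis
    by simp
qed

lemma ls_fit_nonzero:
  fixes A :: "real^'n^'m"
  assumes "inj ((*v) A)" and "\<not> (\<forall>y. b \<bullet> (A *v y) = 0)"
  shows "A *v ls_solution A b \<noteq> 0"
proof
  assume "A *v ls_solution A b = 0"
  then have "transpose A *v b = 0"
    using ls_solution_normal_equations[OF assms(1), of b]
    by (simp add: matrix_vector_mul_assoc[symmetric])
  then have "b \<bullet> (A *v y) = 0" for y
    by (simp add: inner_commute[of b] inner_matrix_vector_transpose)
  then show False
    using assms(2) by blast
qed

lemma ls_pythagoras:
  fixes A :: "real^'n^'m"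
  assumes "inj ((*v) A)"
  shows "(norm b)\<^sup>2 = (norm (A *v ls_solution A b))\<^sup>2 + (norm (ls_residual A b))\<^sup>2"
proof -
  have "A *v - ls_solution A b = - (A *v ls_solution A b)"
    by (simp add: vec_eq_iff matrix_vector_mult_def sum_negf)
  then show ?thesis
    using normal_equations_pythagoras[OF ls_solution_normal_equations[OF assms], of 0 b]
    by (simp add: ls_residual_def)
qed

lemma ls_theta_sin_cos:
  fixes A :: "real^'n^'m"
  assumes "inj ((*v) A)" and "b \<noteq> 0"
  shows "sin (ls_theta A b) = norm (ls_residual A b) / norm b"
    and "cos (ls_theta A b) = norm (A *v ls_solution A b) / norm b"
proof -
  define s where "s = norm (ls_residual A b) / norm b"
  note pythagoras = ls_pythagoras[OF assms(1), of b]
  have "norm (ls_residual A b) \<le> norm b"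
    using pythagoras by (rule_tac power2_le_imp_le) simp_all
  then have "0 \<le> s" and "s \<le> 1"
    using \<open>b \<noteq> 0\<close> by (simp_all add: s_def)
  then show "sin (ls_theta A b) = norm (ls_residual A b) / norm b"
    by (simp add: ls_theta_def s_def[symmetric])
  have "1 - s\<^sup>2 = ((norm b)\<^sup>2 - (norm (ls_residual A b))\<^sup>2) / (norm b)\<^sup>2"
    using \<open>b \<noteq> 0\<close> by (simp add: s_def power_divide field_simps)
  also have "\<dots> = (norm (A *v ls_solution A b) / norm b)\<^sup>2"
    by (simp add: pythagoras power_divide)
  finally show "cos (ls_theta A b) = norm (A *v ls_solution A b) / norm b"
    using \<open>0 \<le> s\<close> \<open>s \<le> 1\<close> by (simp add: ls_theta_def s_def[symmetric] cos_arcsin)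
qed

lemma kappa_LS_le_fit_ratio:
  fixes A :: "real^'n^'m"
  assumes inj: "inj ((*v) A)" and fit: "A *v ls_solution A b \<noteq> 0"
  shows "kappa_LS A b \<le> 3 * (kappa A)\<^sup>2 * norm b / norm (A *v ls_solution A b)"
proof -
  have "b \<noteq> 0"
  proof
    assume "b = 0"
    then have "(norm (A *v ls_solution A b))\<^sup>2 + (norm (ls_residual A b))\<^sup>2 = 0"
      using ls_pythagoras[OF inj, of b] by simp
    then show False
      using fit by (simp add: sum_power2_eq_zero_iff)
  qed
  note sin_cos = ls_theta_sin_cos[OF inj this]
  let ?c = "cos (ls_theta A b)" and ?s = "sin (ls_theta A b)"
  have "0 < ?c"
    using fit \<open>b \<noteq> 0\<close> by (simp add: sin_cos)
  have "1 \<le> kappa A"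
    by (rule kappa_ge_one[OF inj])
  then have "kappa A \<le> (kappa A)\<^sup>2"
    using mult_right_mono[of 1 "kappa A" "kappa A"] by (simp add: power2_eq_square)
  moreover have "?s * (kappa A)\<^sup>2 \<le> (kappa A)\<^sup>2"
    using mult_right_mono[OF sin_le_one, of "(kappa A)\<^sup>2"] by simp
  ultimately have "2 * kappa A + ?s * (kappa A)\<^sup>2 \<le> 3 * (kappa A)\<^sup>2"
    by linarith
  have "kappa_LS A b = (2 * kappa A + ?s * (kappa A)\<^sup>2) / ?c"
    using \<open>0 < ?c\<close> by (simp add: kappa_LS_def tan_def field_simps)
  also have "\<dots> \<le> 3 * (kappa A)\<^sup>2 / ?c"
    using \<open>2 * kappa A + ?s * (kappa A)\<^sup>2 \<le> 3 * (kappa A)\<^sup>2\<close> \<open>0 < ?c\<close>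
    by (intro divide_right_mono) auto
  also have "\<dots> = 3 * (kappa A)\<^sup>2 * norm b / norm (A *v ls_solution A b)"
    by (simp add: sin_cos)
  finally show ?thesis .
qed

lemma det_Ints:
  fixes M :: "real^'n^'n"
  assumes "\<And>i j. M $ i $ j \<in> \<int>"
  shows "det M \<in> \<int>"
  unfolding det_def using assms by (intro Ints_sum Ints_mult Ints_prod) auto

lemma Ints_det_mult_solution:
  fixes M :: "real^'n^'n"
  assumes M_int: "\<And>i j. M $ i $ j \<in> \<int>" and c_int: "\<And>i. c $ i \<in> \<int>"
    and "M *v x = c" and "det M \<noteq> 0"
  shows "det M * x $ k \<in> \<int>"
proof -
  have "x = (\<chi> k. det (\<chi> i j. if j = k then c $ i else M $ i $ j) / det M)"
    using cramer[OF \<open>det M \<noteq> 0\<close>] \<open>M *v x = c\<close> by simp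
  then have "det M * x $ k = det (\<chi> i j. if j = k then c $ i else M $ i $ j)"
    using \<open>det M \<noteq> 0\<close> by (subst (asm) vec_eq_iff) simp
  then show ?thesis
    by (simp add: det_Ints M_int c_int)
qed

lemma integral_ls_fit_lower_bound:
  fixes A :: "real^'n^'m"
  assumes A_int: "\<And>i j. A $ i $ j \<in> \<int>" and b_int: "\<And>i. b $ i \<in> \<int>"
    and inj: "inj ((*v) A)" and fit: "A *v ls_solution A b \<noteq> 0"
  shows "1 \<le> det (transpose A ** A) * norm (A *v ls_solution A b)"
proof -
  define G where "G = transpose A ** A"
  define c where "c = transpose A *v b"
  define x where "x = ls_solution A b"
  have normal: "G *v x = c"
    unfolding G_def c_def x_def by (rule ls_solution_normal_equations[OF inj])
  have G_int: "G $ i $ j \<in> \<int>" for i j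
    using A_int by (simp add: G_def matrix_matrix_mult_def transpose_def Ints_sum Ints_mult)
  have c_int: "c $ i \<in> \<int>" for i
    using A_int b_int by (simp add: c_def matrix_vector_mult_def transpose_def Ints_sum Ints_mult)
  have "0 < det G"
    unfolding G_def by (rule det_gram_pos[OF inj])
  then have "1 \<le> det G"
    using Ints_nonzero_abs_ge1[OF det_Ints[OF G_int]] by simp
  have Dx_int: "det G * x $ k \<in> \<int>" for k
    using Ints_det_mult_solution[OF G_int c_int normal] \<open>0 < det G\<close> by simp
  have "det G * (x \<bullet> c) = (\<Sum>k\<in>UNIV. (det G * x $ k) * c $ k)"
    by (simp add: inner_vec_def sum_distrib_left mult.assoc)
  also have "\<dots> \<in> \<int>"
    by (rule Ints_sum) (rule Ints_mult[OF Dx_int c_int])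
  also have "x \<bullet> c = (norm (A *v x))\<^sup>2"
    using gram_quadratic_form[of x A x] normal by (simp add: G_def power2_norm_eq_inner)
  finally have "det G * (norm (A *v x))\<^sup>2 \<in> \<int>" .
  moreover have "0 < det G * (norm (A *v x))\<^sup>2"
    using \<open>0 < det G\<close> fit by (simp add: x_def)
  ultimately have "1 \<le> det G * (norm (A *v x))\<^sup>2"
    using Ints_nonzero_abs_ge1 by fastforce
  then have "1 * 1 \<le> det G * (det G * (norm (A *v x))\<^sup>2)"
    using \<open>1 \<le> det G\<close> by (intro mult_mono) auto
  then have "1\<^sup>2 \<le> (det G * norm (A *v x))\<^sup>2"
    by (simp add: power2_eq_square mult_ac)
  then show ?thesis
    unfolding G_def x_def by (rule power2_le_imp_le) (use \<open>0 < det G\<close> in \<open>simp add: G_def\<close>)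
qed

lemma height_bounds:
  shows abs_entry_le_height: "\<bar>A $ i $ j\<bar> \<le> height A b"
    and abs_rhs_le_height: "\<bar>b $ k\<bar> \<le> height A b"
proof -
  have "{\<bar>A $ i $ j\<bar> | i j. True} = (\<lambda>(i, j). \<bar>A $ i $ j\<bar>) ` UNIV"
    and "{\<bar>b $ i\<bar> | i. True} = (\<lambda>i. \<bar>b $ i\<bar>) ` UNIV"
    by auto
  then have "finite ({\<bar>A $ i $ j\<bar> | i j. True} \<union> {\<bar>b $ i\<bar> | i. True})"
    by simp
  then show "\<bar>A $ i $ j\<bar> \<le> height A b" and "\<bar>b $ k\<bar> \<le> height A b"
    unfolding height_def by (blast intro: Max_ge)+
qed

lemma norm_le_sqrt_card_mult:
  fixes v :: "real^'n"
  assumes "\<And>i. \<bar>v $ i\<bar> \<le> H"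
  shows "norm v \<le> sqrt (real CARD('n)) * H"
proof -
  have "0 \<le> H"
    using assms abs_ge_zero order_trans by blast
  have "norm v = sqrt (v \<bullet> v)"
    by (rule norm_eq_sqrt_inner)
  also have "\<dots> \<le> sqrt (real CARD('n) * H\<^sup>2)"
    using inner_self_le_card_mult[OF assms] by simp
  also have "\<dots> = sqrt (real CARD('n)) * H"
    using \<open>0 \<le> H\<close> by (simp add: real_sqrt_mult)
  finally show ?thesis .
qed

lemma pow_bound_le_powr_bound:
  fixes n m :: nat and H :: real
  assumes "1 \<le> n" and "1 \<le> m" and "0 \<le> H"
  shows "(real n)\<^sup>2 * real m ^ n * H ^ (2 * n) * (sqrt (real m) * H)
    \<le> real n powr (real n / 2 + 1) * real m powr (real n + 1 / 2) * H ^ (2 * n + 1)"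
proof -
  have n_le: "(real n)\<^sup>2 \<le> real n powr (real n / 2 + 1)"
  proof (cases "n = 1")
    case False
    have "(real n)\<^sup>2 = real n powr 2"
      using assms(1) by (simp add: powr_realpow)
    also have "\<dots> \<le> real n powr (real n / 2 + 1)"
      using assms(1) False by (intro powr_mono) auto
    finally show ?thesis .
  qed simp
  have m_eq: "real m ^ n * sqrt (real m) = real m powr (real n + 1 / 2)"
    using assms(2) by (simp add: powr_add powr_realpow powr_half_sqrt)
  have "(real n)\<^sup>2 * real m ^ n * H ^ (2 * n) * (sqrt (real m) * H)
      = (real n)\<^sup>2 * (real m ^ n * sqrt (real m)) * (H ^ (2 * n) * H)"
    by (simp only: mult_ac)
  also have "\<dots> \<le> real n powr (real n / 2 + 1) * (real m ^ n * sqrt (real m)) * (H ^ (2 * n) * H)"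
    using n_le assms by (intro mult_right_mono) auto
  also have "\<dots> = real n powr (real n / 2 + 1) * real m powr (real n + 1 / 2) * H ^ (2 * n + 1)"
    by (simp add: m_eq)
  finally show ?thesis .
qed

lemma integral_kappa_LS_le:
  fixes A :: "real^'n^'m"
  assumes A_int: "\<And>i j. A $ i $ j \<in> \<int>" and b_int: "\<And>i. b $ i \<in> \<int>"
    and inj: "inj ((*v) A)" and not_orth: "\<not> (\<forall>y. b \<bullet> (A *v y) = 0)"
  shows "kappa_LS A b \<le> 3 * ((kappa A)\<^sup>2 * det (transpose A ** A) * norm b)"
proof -
  define D where "D = det (transpose A ** A)"
  define fit where "fit = A *v ls_solution A b"
  have "fit \<noteq> 0"
    unfolding fit_def by (rule ls_fit_nonzero[OF inj not_orth])
  have "1 \<le> D * norm fit"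
    unfolding D_def fit_def by (rule integral_ls_fit_lower_bound[OF A_int b_int inj \<open>fit \<noteq> 0\<close>[unfolded fit_def]])
  have "kappa_LS A b \<le> 3 * (kappa A)\<^sup>2 * norm b * (1 / norm fit)"
    using kappa_LS_le_fit_ratio[OF inj \<open>fit \<noteq> 0\<close>[unfolded fit_def]] by (simp add: fit_def)
  also have "\<dots> \<le> 3 * (kappa A)\<^sup>2 * norm b * D"
    using \<open>1 \<le> D * norm fit\<close> \<open>fit \<noteq> 0\<close> by (intro mult_left_mono) (simp_all add: divide_le_eq)
  finally show ?thesis
    by (simp add: D_def mult_ac)
qed

theorem theorem2:
  fixes A :: "real^'n^'m" and b :: "real^'m"
  assumes "CARD('n) \<le> CARD('m)"
    and "\<forall>i j. A $ i $ j \<in> \<int>"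
    and "\<forall>i. b $ i \<in> \<int>"
    and "rank A = CARD('n)"
    and "\<not> (\<forall>y. b \<bullet> (A *v y) = 0)"
  shows "kappa_LS A b \<le> 3 * real CARD('n) powr (real CARD('n) / 2 + 1)
           * real CARD('m) powr (real CARD('n) + 1 / 2) * height A b ^ (2 * CARD('n) + 1)"
proof -
  \<comment> \<open>The hypothesis CARD('n) \<le> CARD('m) is implied by the rank condition and not needed.\<close>
  define H where "H = height A b"
  have inj: "inj ((*v) A)"
    using assms(4) full_rank_injective by blast
  have kd: "(kappa A)\<^sup>2 * det (transpose A ** A)
      \<le> (real CARD('n))\<^sup>2 * real CARD('m) ^ CARD('n) * H ^ (2 * CARD('n))"
    unfolding H_def by (rule kappa_sq_det_gram_le[OF inj abs_entry_le_height])
  have nb: "norm b \<le> sqrt (real CARD('m)) * H"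
    unfolding H_def by (rule norm_le_sqrt_card_mult[OF abs_rhs_le_height])
  have "0 \<le> (kappa A)\<^sup>2 * det (transpose A ** A)"
    using det_gram_pos[OF inj] by simp
  have "0 \<le> H"
    unfolding H_def by (rule order_trans[OF abs_ge_zero abs_rhs_le_height])
  have "kappa_LS A b \<le> 3 * ((kappa A)\<^sup>2 * det (transpose A ** A) * norm b)"
    using assms(2,3,5) inj by (intro integral_kappa_LS_le) auto
  also have "\<dots> \<le> 3 * ((real CARD('n))\<^sup>2 * real CARD('m) ^ CARD('n)
      * H ^ (2 * CARD('n)) * (sqrt (real CARD('m)) * H))"
    using nb \<open>0 \<le> (kappa A)\<^sup>2 * det (transpose A ** A)\<close> kd
    by (intro mult_left_mono mult_mono[OF kd]) auto
  also have "\<dots> \<le> 3 * (real CARD('n) powr (real CARD('n) / 2 + 1)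
      * real CARD('m) powr (real CARD('n) + 1 / 2) * H ^ (2 * CARD('n) + 1))"
    using pow_bound_le_powr_bound[of "CARD('n)" "CARD('m)" H] \<open>0 \<le> H\<close>
    by (intro mult_left_mono) auto
  finally show ?thesis
    by (simp only: H_def mult.assoc)
qed

end
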